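(* Let $a>0$ and let $\epsilon>0$ be sufficiently small. For any solution $(x,v(x))$ of the regularized system $$\dot x=1,\qquad \epsilon\dot v=-a\epsilon v-\sin\!\left(\pi x\left[1+\tfrac12\psi(v)\right]\right)$$ there exists $x_T\ge0$ such that for all $x\ge x_T$ the solution is constrained in $V_0\cup V_-=\{(x,v):v<1\}$.
   Context: $\psi:\mathbb{R}\to\mathbb{R}$ is a transition function: $C^1$ on $\mathbb{R}$ and $C^2$ on $[-1,1]$, with $\psi(v)=\operatorname{sign}(v)$ for $|v|\ge1$, $\psi'(v)>0$ for $|v|<1$, and $\operatorname{sign}\psi''(v)=-\operatorname{sign}(v)$ at $|v|=1$. $V_0=\{|v|<1\}$ is the switching layer, $V_\pm=\{\pm v\ge1\}$ (note $V_-=\{v\le-1\}$). *)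

theory Defs
  imports "HOL-Analysis.Analysis"
begin

definition transition_function :: "(real \<Rightarrow> real) \<Rightarrow> bool" where
  "transition_function \<psi> \<longleftrightarrow>
     (\<forall>v. \<psi> differentiable at v) \<and> continuous_on UNIV (deriv \<psi>) \<and>
     (\<exists>\<psi>2. (\<forall>v\<in>{-1..1}. (deriv \<psi> has_real_derivative \<psi>2 v) (at v within {-1..1}))
          \<and> continuous_on {-1..1} \<psi>2
          \<and> sgn (\<psi>2 1) = - sgn (1::real) \<and> sgn (\<psi>2 (-1)) = - sgn (-1::real)) \<and>
     (\<forall>v. \<bar>v\<bar> \<ge> 1 \<longrightarrow> \<psi> v = sgn v) \<and>
     (\<forall>v. \<bar>v\<bar> < 1 \<longrightarrow> deriv \<psi> v > 0)"

definition regularized_solution ::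
    "(real \<Rightarrow> real) \<Rightarrow> real \<Rightarrow> real \<Rightarrow> real \<Rightarrow> (real \<Rightarrow> real) \<Rightarrow> bool" where
  "regularized_solution \<psi> a \<epsilon> x0 v \<longleftrightarrow>
     (\<forall>x\<ge>x0. \<exists>D. (v has_real_derivative D) (at x within {x0..}) \<and>
        \<epsilon> * D = - a * \<epsilon> * v x - sin (pi * x * (1 + \<psi> (v x) / 2)))"

end

theory Submission
  imports Defs
begin

text \<open>Write the argument of the sine as pi times the phase x (1 + psi(v)/2), which equals 3x/2
  exactly when v \<ge> 1. Above the switching layer the equation is therefore linear with frequency
  3 pi/2, and the deviation of v from its periodic forced response decays exponentially; as this
  deviation stays below 1 plus the amplitude of the response once v has been at most 1, the
  solution is back at v \<le> 1 at minima x_k of the response arbitrarily far out. Right after x_k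
  the phase lies in a band where sin(pi phase) is bounded below, and for small eps this drives v
  down so fast that the phase drops below the level 2k + 1/8. From then on the phase stays below
  the nondecreasing step function whose values are the levels 2n + 1/8 lying below 3x/2: at a
  contact the forcing is sin(pi/8) > 0, and since psi''(1) < 0 the derivative psi' dominates
  1 - psi near v = 1, so the phase has negative slope there. As the phase is 3x/2 whenever
  v \<ge> 1, this keeps v < 1.\<close>

section \<open>Real functions on intervals\<close>

lemma isCont_eventually_const_eq:
  fixes f :: "real \<Rightarrow> real"
  assumes "isCont f x" "at x within S \<noteq> bot" "\<forall>\<^sub>F y in at x within S. f y = c"
  shows "f x = c"
proof -
  have "(f \<longlongrightarrow> f x) (at x within S)"
    using assms(1) by (metis continuous_at_imp_continuous_at_within continuous_within)
  moreover have "(f \<longlongrightarrow> c) (at x within S)"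
    using assms(3) by (rule tendsto_eventually)
  ultimately show ?thesis
    using assms(2) tendsto_unique by blast
qed

lemma first_contact:
  fixes m L :: "real \<Rightarrow> real"
  assumes L: "mono L" and m: "\<And>x. x \<ge> x1 \<Longrightarrow> isCont m x" and start: "m x1 < L x1"
    and contact: "x \<ge> x1" "L x \<le> m x"
  obtains xc where "x1 < xc" "m xc = L xc" "\<And>y. x1 \<le> y \<Longrightarrow> y < xc \<Longrightarrow> m y < L y"
proof -
  define A where "A = {y. x1 \<le> y \<and> L y \<le> m y}"
  define xc where "xc = Inf A"
  have A: "x \<in> A" "bdd_below A"
    using contact by (auto simp: A_def intro: bdd_belowI[of _ x1])
  have x1_le: "x1 \<le> xc"
    unfolding xc_def using A(1) by (intro cInf_greatest) (auto simp: A_def)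
  have before: "m y < L y" if "x1 \<le> y" "y < xc" for y
    using cInf_lower[OF _ A(2), of y] that by (force simp: A_def xc_def)
  have ge: "L xc \<le> m xc"
  proof (rule ccontr)
    assume "\<not> L xc \<le> m xc"
    then have "\<forall>\<^sub>F y in at_right xc. m y < L xc"
      using m[OF x1_le] by (intro order_tendstoD) (auto simp: isCont_def filterlim_at_split)
    then obtain b where b: "xc < b" "\<And>y. xc < y \<Longrightarrow> y < b \<Longrightarrow> m y < L xc"
      by (auto simp: eventually_at_right_field)
    have "b \<le> xc"
      unfolding xc_def
    proof (rule cInf_greatest)
      fix y assume y: "y \<in> A"
      show "b \<le> y"
      proof (rule ccontr)
        assume "\<not> b \<le> y"
        moreover have "L xc \<le> L y" if "xc \<le> y"
          using L that by (rule monoD)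
        ultimately show False
          using y before[of y] b(2)[of y] \<open>\<not> L xc \<le> m xc\<close>
          by (cases y xc rule: linorder_cases) (auto simp: A_def)
      qed
    qed (use A in blast)
    then show False
      using b(1) by simp
  qed
  then have x1_less: "x1 < xc"
    using start x1_le by (cases "x1 = xc") auto
  have "m xc \<le> L xc"
  proof (rule tendsto_upperbound)
    show "(m \<longlongrightarrow> m xc) (at_left xc)"
      using m[OF x1_le] by (simp add: isCont_def filterlim_at_split)
    show "\<forall>\<^sub>F y in at_left xc. m y \<le> L xc"
    proof (rule eventually_at_leftI[OF _ x1_less])
      fix y assume "y \<in> {x1<..<xc}"
      then show "m y \<le> L xc"
        using before[of y] monoD[OF L, of y xc] by simp
    qed
  qed simp
  then show thesis
    using that x1_less ge before by simp
qed

lemma stays_below_nondecreasing: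
  fixes m L :: "real \<Rightarrow> real"
  assumes L: "mono L" and m: "\<And>x. x \<ge> x1 \<Longrightarrow> isCont m x" and start: "m x1 < L x1"
    and slope: "\<And>x. x > x1 \<Longrightarrow> m x = L x \<Longrightarrow> \<exists>l<0. (m has_real_derivative l) (at x)"
    and x: "x \<ge> x1"
  shows "m x < L x"
proof (rule ccontr)
  assume "\<not> m x < L x"
  then have "L x \<le> m x"
    by simp
  then obtain xc where xc: "x1 < xc" "m xc = L xc" "\<And>y. x1 \<le> y \<Longrightarrow> y < xc \<Longrightarrow> m y < L y"
    using first_contact[OF L m start x] by blast
  obtain l where "l < 0" "(m has_real_derivative l) (at xc)"
    using slope[OF xc(1,2)] by blast
  then obtain d where d: "d > 0" "\<And>h. 0 < h \<Longrightarrow> h < d \<Longrightarrow> m xc < m (xc - h)"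
    using DERIV_neg_dec_left by blast
  define y where "y = max x1 (xc - d / 2)"
  have y: "x1 \<le> y" "y < xc" "xc - y < d"
    using xc(1) d(1) by (auto simp: y_def)
  have "m xc < m y"
    using d(2)[of "xc - y"] y by simp
  moreover have "L y \<le> L xc"
    using L y(2) by (simp add: monoD)
  ultimately have "L y < m y"
    using xc(2) by linarith
  then show False
    using xc(3)[OF y(1,2)] by simp
qed

lemma last_time_at_most:
  fixes f :: "real \<Rightarrow> real"
  assumes "X \<le> y" and f: "continuous_on {X..y} f"
  obtains z where "X \<le> z" "z \<le> y" "z = X \<or> f z \<le> c" "\<And>x. z < x \<Longrightarrow> x \<le> y \<Longrightarrow> c < f x"
proof -
  define S where "S = insert X {x \<in> {X..y}. f x \<le> c}"
  have "closed S"
    unfolding S_def using f by (intro closed_insert continuous_on_closed_Collect_le continuous_on_const) auto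
  moreover have S: "S \<subseteq> {X..y}"
    using assms(1) by (auto simp: S_def)
  ultimately have "Sup S \<in> S"
    by (intro closed_contains_Sup) (auto simp: S_def intro: bdd_above_mono[OF bdd_above_Icc S])
  moreover have "c < f x" if "Sup S < x" "x \<le> y" for x
  proof (rule ccontr)
    assume "\<not> c < f x"
    then have "x \<in> S"
      using that \<open>Sup S \<in> S\<close> S by (force simp: S_def)
    then have "x \<le> Sup S"
      by (intro cSup_upper bdd_above_mono[OF bdd_above_Icc S])
    then show False
      using that by simp
  qed
  ultimately show thesis
    using that S by (force simp: S_def)
qed

lemma exp_decay_of_linear_ode:
  fixes w :: "real \<Rightarrow> real"
  assumes "z \<le> y" and w: "continuous_on {z..y} w"
    and w': "\<And>x. z < x \<Longrightarrow> x < y \<Longrightarrow> (w has_real_derivative - a * w x) (at x)"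
  shows "w y = exp (- a * (y - z)) * w z"
proof (cases "z = y")
  case False
  have "exp (a * y) * w y = exp (a * z) * w z"
  proof (rule DERIV_isconst_end[where f = "\<lambda>x. exp (a * x) * w x"])
    show "z < y"
      using assms(1) False by simp
    show "continuous_on {z..y} (\<lambda>x. exp (a * x) * w x)"
      using w by (intro continuous_intros)
    fix x assume "z < x" "x < y"
    then show "((\<lambda>x. exp (a * x) * w x) has_real_derivative 0) (at x)"
      by (auto intro!: derivative_eq_intros w' simp: algebra_simps)
  qed
  then show ?thesis
    by (simp add: algebra_simps exp_diff exp_minus field_simps)
qed simp

lemma exp_neg_mult_le_max: "0 \<le> t \<Longrightarrow> exp (- t) * w \<le> max 0 (w::real)"
  by (cases "0 \<le> w") (auto simp: mult_left_le_one_le mult_nonneg_nonpos)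

lemma eventually_less_mult_at_top: "\<delta> > 0 \<Longrightarrow> \<forall>\<^sub>F x in at_top. c < x * (\<delta>::real)"
  using eventually_gt_at_top[of "c / \<delta>"] by eventually_elim (simp add: pos_divide_less_eq)

section \<open>Periodic response of a forced linear equation\<close>

lemma sin_cos_add_2pi_nat: "sin (x + 2 * pi * real k) = sin x" "cos (x + 2 * pi * real k) = cos x"
proof -
  have "2 * pi * real k = 2 * pi * real_of_int (int k)"
    by simp
  then show "sin (x + 2 * pi * real k) = sin x" "cos (x + 2 * pi * real k) = cos x"
    by (simp_all only: sin_add cos_add sin_int_2pin cos_int_2pin)
qed

lemma harmonic_combination_ge: "- sqrt (w\<^sup>2 + a\<^sup>2) \<le> w * cos t - a * sin t"
proof -
  have "(w * cos t - a * sin t)\<^sup>2 \<le> (w * cos t - a * sin t)\<^sup>2 + (w * sin t + a * cos t)\<^sup>2"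
    by simp
  also have "\<dots> = (w\<^sup>2 + a\<^sup>2) * ((sin t)\<^sup>2 + (cos t)\<^sup>2)"
    by algebra
  also have "\<dots> = w\<^sup>2 + a\<^sup>2"
    by simp
  finally show ?thesis
    using real_sqrt_le_mono real_sqrt_abs by (metis abs_le_D2 minus_le_iff)
qed

lemma harmonic_combination_at_minimum:
  assumes "w > 0"
  shows "w * cos (2 * pi * real k + pi - arctan (a / w)) - a * sin (2 * pi * real k + pi - arctan (a / w))
    = - sqrt (w\<^sup>2 + a\<^sup>2)"
proof -
  define r where "r = sqrt (w\<^sup>2 + a\<^sup>2)"
  have r: "r > 0" "r * r = w\<^sup>2 + a\<^sup>2"
    using assms by (auto simp: r_def add_pos_nonneg)
  have "sqrt (1 + (a / w)\<^sup>2) = r / w"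
    using assms r by (intro real_sqrt_unique) (auto simp: field_simps power2_eq_square)
  then have "cos (arctan (a / w)) = w / r" "sin (arctan (a / w)) = a / r"
    using assms r by (simp_all add: cos_arctan sin_arctan)
  moreover have "2 * pi * real k + pi - arctan (a / w) = (pi - arctan (a / w)) + 2 * pi * real k"
    by simp
  ultimately have "w * cos (2 * pi * real k + pi - arctan (a / w)) - a * sin (2 * pi * real k + pi - arctan (a / w))
      = - (r * r) / r"
    using r by (simp only: sin_cos_add_2pi_nat cos_diff sin_diff) (simp add: field_simps power2_eq_square)
  then show ?thesis
    using r(1) unfolding r_def[symmetric] by simp
qed

definition forced_response :: "real \<Rightarrow> real \<Rightarrow> real \<Rightarrow> real \<Rightarrow> real" where
  "forced_response a \<epsilon> w x = (w * cos (w * x) - a * sin (w * x)) / (\<epsilon> * (w\<^sup>2 + a\<^sup>2))"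

lemma forced_response_has_derivative:
  assumes "\<epsilon> \<noteq> 0" "w\<^sup>2 + a\<^sup>2 \<noteq> 0"
  shows "(forced_response a \<epsilon> w has_real_derivative
      - a * forced_response a \<epsilon> w x - sin (w * x) / \<epsilon>) (at x)"
proof -
  have "((\<lambda>x. w * cos (w * x) - a * sin (w * x)) has_real_derivative
      - w * w * sin (w * x) - a * w * cos (w * x)) (at x)"
    by (auto intro!: derivative_eq_intros)
  then have "(forced_response a \<epsilon> w has_real_derivative
      (- w * w * sin (w * x) - a * w * cos (w * x)) / (\<epsilon> * (w\<^sup>2 + a\<^sup>2))) (at x)"
    unfolding forced_response_def[abs_def] by (rule DERIV_cdivide)
  moreover have "(- w * w * sin (w * x) - a * w * cos (w * x)) / (\<epsilon> * (w\<^sup>2 + a\<^sup>2))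
      = - a * forced_response a \<epsilon> w x - sin (w * x) / \<epsilon>"
  proof -
    have "sin (w * x) / \<epsilon> = sin (w * x) * (w\<^sup>2 + a\<^sup>2) / (\<epsilon> * (w\<^sup>2 + a\<^sup>2))"
      using assms by simp
    moreover have "- w * w * sin (w * x) - a * w * cos (w * x)
        = - a * (w * cos (w * x) - a * sin (w * x)) - sin (w * x) * (w\<^sup>2 + a\<^sup>2)"
      by (simp add: power2_eq_square algebra_simps)
    ultimately show ?thesis
      unfolding forced_response_def by (simp add: diff_divide_distrib right_diff_distrib)
  qed
  ultimately show ?thesis
    by simp
qed

lemma forced_response_ge:
  assumes "\<epsilon> > 0" "w\<^sup>2 + a\<^sup>2 > 0"
  shows "- 1 / (\<epsilon> * sqrt (w\<^sup>2 + a\<^sup>2)) \<le> forced_response a \<epsilon> w x"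
proof -
  define r where "r = sqrt (w\<^sup>2 + a\<^sup>2)"
  have r: "r > 0" "w\<^sup>2 + a\<^sup>2 = r * r"
    using assms(2) by (auto simp: r_def)
  have "- r \<le> w * cos (w * x) - a * sin (w * x)"
    unfolding r_def by (rule harmonic_combination_ge)
  then have "- r / (\<epsilon> * (w\<^sup>2 + a\<^sup>2)) \<le> forced_response a \<epsilon> w x"
    unfolding forced_response_def using assms by (intro divide_right_mono) auto
  moreover have "- r / (\<epsilon> * (w\<^sup>2 + a\<^sup>2)) = - 1 / (\<epsilon> * r)"
    using assms(1) r by simp
  ultimately show ?thesis
    by (simp add: r_def)
qed

lemma forced_response_at_minimum:
  assumes "w > 0"
  shows "forced_response a \<epsilon> w ((2 * pi * real k + pi - arctan (a / w)) / w)
    = - 1 / (\<epsilon> * sqrt (w\<^sup>2 + a\<^sup>2))"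
proof -
  define r where "r = sqrt (w\<^sup>2 + a\<^sup>2)"
  have r: "r > 0" "w\<^sup>2 + a\<^sup>2 = r * r"
    using assms by (auto simp: r_def add_pos_nonneg)
  show ?thesis
    using assms harmonic_combination_at_minimum[OF assms, of k a] r
    by (simp add: forced_response_def r_def[symmetric])
qed

section \<open>Transition functions\<close>

locale transition =
  fixes \<psi> :: "real \<Rightarrow> real"
  assumes transition_function: "transition_function \<psi>"
begin

lemma has_derivative: "(\<psi> has_real_derivative deriv \<psi> u) (at u)"
  using transition_function
  by (simp add: transition_function_def DERIV_deriv_iff_real_differentiable)

lemma isCont_deriv: "isCont (deriv \<psi>) u"
  using transition_function
  by (simp add: transition_function_def continuous_on_eq_continuous_at)

lemma eq_sgn: "\<bar>u\<bar> \<ge> 1 \<Longrightarrow> \<psi> u = sgn u"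
  using transition_function by (simp add: transition_function_def)

lemma eq_1: "u \<ge> 1 \<Longrightarrow> \<psi> u = 1"
  using eq_sgn[of u] by simp

lemma deriv_pos: "\<bar>u\<bar> < 1 \<Longrightarrow> deriv \<psi> u > 0"
  using transition_function by (simp add: transition_function_def)

lemma deriv_eq_0_outside: "\<bar>u\<bar> > 1 \<Longrightarrow> deriv \<psi> u = 0"
proof -
  assume u: "\<bar>u\<bar> > 1"
  have "\<forall>\<^sub>F t in nhds u. \<psi> t = sgn u"
  proof (cases "u > 1")
    case True
    have "\<forall>\<^sub>F t in nhds u. t \<in> {1<..}"
      using True by (intro eventually_nhds_in_open) auto
    then show ?thesis
      by eventually_elim (use True in \<open>simp add: eq_sgn\<close>)
  next
    case False
    then have "u < -1" using u by linarith
    then have "\<forall>\<^sub>F t in nhds u. t \<in> {..<-1}"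
      by (intro eventually_nhds_in_open) auto
    then show ?thesis
      by eventually_elim (use \<open>u < -1\<close> in \<open>simp add: eq_sgn\<close>)
  qed
  then have "(\<psi> has_real_derivative 0) (at u)"
    by (rule DERIV_cong_ev[OF refl _ refl, THEN iffD2]) simp
  then show ?thesis
    using has_derivative DERIV_unique by blast
qed

lemma deriv_eq_0: "\<bar>u\<bar> \<ge> 1 \<Longrightarrow> deriv \<psi> u = 0"
proof -
  assume u: "\<bar>u\<bar> \<ge> 1"
  consider "\<bar>u\<bar> > 1" | "u = 1" | "u = -1"
    using u by linarith
  then show ?thesis
  proof cases
    case 1
    then show ?thesis by (rule deriv_eq_0_outside)
  next
    case 2
    have "\<forall>\<^sub>F t in at_right 1. deriv \<psi> t = 0"
      using eventually_at_right_less by eventually_elim (simp add: deriv_eq_0_outside)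
    then show ?thesis
      unfolding 2 by (rule isCont_eventually_const_eq[OF isCont_deriv trivial_limit_at_right_real])
  next
    case 3
    have "\<forall>\<^sub>F t in at_left (-1). deriv \<psi> t = 0"
      by (rule eventually_at_leftI[of "-2"]) (auto intro: deriv_eq_0_outside)
    then show ?thesis
      unfolding 3 by (rule isCont_eventually_const_eq[OF isCont_deriv trivial_limit_at_left_real])
  qed
qed

lemma deriv_nonneg: "deriv \<psi> u \<ge> 0"
  using deriv_pos[of u] deriv_eq_0[of u] by (cases "\<bar>u\<bar> < 1") auto

lemma mono: "u \<le> w \<Longrightarrow> \<psi> u \<le> \<psi> w"
  by (rule deriv_nonneg_imp_mono[of u w \<psi> "deriv \<psi>"]) (auto intro: has_derivative deriv_nonneg)

lemma le_1: "\<psi> u \<le> 1"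
  using mono[of u "max u 1"] eq_1[of "max u 1"] by simp

lemma less_1: "u < 1 \<Longrightarrow> \<psi> u < 1"
proof -
  assume u: "u < 1"
  show ?thesis
  proof (cases "u \<le> -1")
    case True
    then show ?thesis using eq_sgn[of u] by simp
  next
    case False
    obtain z where z: "u < z" "z < 1" "\<psi> 1 - \<psi> u = (1 - u) * deriv \<psi> z"
      using MVT2[of u 1 \<psi> "deriv \<psi>"] has_derivative u by blast
    have "deriv \<psi> z > 0"
      using deriv_pos z False by auto
    then have "(1 - u) * deriv \<psi> z > 0"
      using u by simp
    then show ?thesis
      using z(3) eq_1[of 1] by linarith
  qed
qed

lemma eventually_gap_le_linear:
  assumes "\<kappa> > 0"
  shows "\<forall>\<^sub>F u in at_left 1. 1 - \<psi> u \<le> \<kappa> * (1 - u)"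
proof -
  have "(deriv \<psi> \<longlongrightarrow> 0) (at_left 1)"
    using isCont_deriv[of 1] deriv_eq_0[of 1] by (simp add: isCont_def filterlim_at_split)
  then have "\<forall>\<^sub>F t in at_left 1. deriv \<psi> t < \<kappa>"
    using assms by (rule order_tendstoD)
  then obtain b where b: "b < 1" "\<And>t. b < t \<Longrightarrow> t < 1 \<Longrightarrow> deriv \<psi> t < \<kappa>"
    by (auto simp: eventually_at_left_field)
  show ?thesis
  proof (rule eventually_at_leftI[OF _ b(1)])
    fix u assume u: "u \<in> {b<..<1}"
    obtain z where z: "u < z" "z < 1" "\<psi> 1 - \<psi> u = (1 - u) * deriv \<psi> z"
      using MVT2[of u 1 \<psi> "deriv \<psi>"] has_derivative u by auto
    have "(1 - u) * deriv \<psi> z \<le> (1 - u) * \<kappa>"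
      using b(2)[of z] z u by (intro mult_left_mono) auto
    then show "1 - \<psi> u \<le> \<kappa> * (1 - u)"
      using z eq_1[of 1] by (simp add: mult.commute)
  qed
qed

lemma eventually_deriv_ge_linear: "\<exists>c>0. \<forall>\<^sub>F u in at_left 1. c * (1 - u) \<le> deriv \<psi> u"
proof -
  obtain \<psi>2 where d2: "\<forall>t\<in>{-1..1}. (deriv \<psi> has_real_derivative \<psi>2 t) (at t within {-1..1})"
    and c2: "continuous_on {-1..1} \<psi>2" and neg: "\<psi>2 1 < 0"
    using transition_function unfolding transition_function_def by (auto simp: sgn_if split: if_splits)
  define c where "c = - \<psi>2 1 / 2"
  have c: "c > 0"
    using neg by (simp add: c_def)
  have "(\<psi>2 \<longlongrightarrow> \<psi>2 1) (at_left 1)"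
    using c2 unfolding continuous_on_def at_within_Icc_at_left[of "-1" "1::real", simplified, symmetric]
    by simp
  then have "\<forall>\<^sub>F t in at_left 1. \<psi>2 t < - c"
    using neg by (intro order_tendstoD) (auto simp: c_def)
  moreover have "\<forall>\<^sub>F t in at_left 1. t > (0::real)"
    by (rule eventually_at_leftI[of 0]) auto
  ultimately have "\<forall>\<^sub>F t in at_left 1. \<psi>2 t < - c \<and> t > 0"
    by (rule eventually_conj)
  then obtain b where b: "b < 1" "\<And>t. b < t \<Longrightarrow> t < 1 \<Longrightarrow> \<psi>2 t < - c \<and> t > 0"
    by (auto simp: eventually_at_left_field)
  have "c * (1 - u) \<le> deriv \<psi> u" if u: "b < u" "u < 1" for u
  proof -
    have "deriv \<psi> 1 + c * 1 \<le> deriv \<psi> u + c * u"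
    proof (rule DERIV_nonpos_imp_decreasing_open[of u 1 "\<lambda>t. deriv \<psi> t + c * t"])
      fix t assume t: "u < t" "t < 1"
      then have "t \<in> interior {-1..1::real}"
        using b(2)[of t] u by auto
      then have "(deriv \<psi> has_real_derivative \<psi>2 t) (at t)"
        using d2 at_within_interior[of t "{-1..1::real}"] interior_subset by fastforce
      then show "\<exists>y. ((\<lambda>t. deriv \<psi> t + c * t) has_real_derivative y) (at t) \<and> y \<le> 0"
        using b(2)[of t] t u by (intro exI[of _ "\<psi>2 t + c"]) (auto intro!: derivative_eq_intros)
    next
      show "continuous_on {u..1} (\<lambda>t. deriv \<psi> t + c * t)"
        by (intro continuous_intros continuous_at_imp_continuous_on ballI isCont_deriv)
    qed (use u in auto)
    then show ?thesis
      using deriv_eq_0[of 1] by (simp add: algebra_simps)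
  qed
  then show ?thesis
    using c b(1) by (intro exI[of _ c] conjI eventually_at_leftI[of b]) auto
qed

lemma eventually_deriv_ge_gap:
  assumes "\<Lambda> > 0"
  shows "\<forall>\<^sub>F u in at_left 1. \<Lambda> * (1 - \<psi> u) \<le> deriv \<psi> u"
proof -
  obtain c where c: "c > 0" and lin: "\<forall>\<^sub>F u in at_left 1. c * (1 - u) \<le> deriv \<psi> u"
    using eventually_deriv_ge_linear by blast
  have "\<forall>\<^sub>F u in at_left 1. 1 - \<psi> u \<le> c / \<Lambda> * (1 - u)"
    using c assms by (intro eventually_gap_le_linear) simp
  with lin show ?thesis
  proof eventually_elim
    case (elim u)
    have "\<Lambda> * (1 - \<psi> u) \<le> \<Lambda> * (c / \<Lambda> * (1 - u))"
      using elim(2) assms by (intro mult_left_mono) simp_all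
    also have "\<dots> = c * (1 - u)"
      using assms by simp
    finally show ?case
      using elim(1) by linarith
  qed
qed

end

section \<open>The regularized system\<close>

definition phase_barrier :: "real \<Rightarrow> real" where
  "phase_barrier x = 2 * real_of_int \<lfloor>(3 / 2 * x - 1 / 4) / 2\<rfloor> + 1 / 8"

lemma mono_phase_barrier: "mono phase_barrier"
  by (rule monoI) (simp add: phase_barrier_def floor_mono)

lemma phase_barrier_bounds: "phase_barrier x \<le> 3 / 2 * x - 1 / 8" "3 / 2 * x - phase_barrier x < 17 / 8"
proof -
  define n where "n = real_of_int \<lfloor>(3 / 2 * x - 1 / 4) / 2\<rfloor>"
  have "n \<le> (3 / 2 * x - 1 / 4) / 2" "(3 / 2 * x - 1 / 4) / 2 < n + 1"
    unfolding n_def by linarith+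
  moreover have "phase_barrier x = 2 * n + 1 / 8"
    by (simp add: phase_barrier_def n_def)
  ultimately show "phase_barrier x \<le> 3 / 2 * x - 1 / 8" "3 / 2 * x - phase_barrier x < 17 / 8"
    by simp_all
qed

lemma phase_barrier_eq:
  assumes "2 * real k + 1 / 4 \<le> 3 / 2 * x" "3 / 2 * x < 2 * real k + 9 / 4"
  shows "phase_barrier x = 2 * real k + 1 / 8"
proof -
  have "\<lfloor>(3 / 2 * x - 1 / 4) / 2\<rfloor> = int k"
    using assms by (intro floor_unique) simp_all
  then show ?thesis
    by (simp add: phase_barrier_def)
qed

lemma sin_pi_phase_barrier: "sin (pi * phase_barrier x) = sin (pi / 8)"
proof -
  have "pi * phase_barrier x = pi / 8 + 2 * pi * real_of_int \<lfloor>(3 / 2 * x - 1 / 4) / 2\<rfloor>"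
    by (simp add: phase_barrier_def algebra_simps)
  then show ?thesis
    by (simp add: sin_add)
qed

locale damped_switching = transition +
  fixes a :: real
  assumes a_pos: "a > 0"
begin

definition lag :: real where
  "lag = arctan (a / (3 * pi / 2))"

definition return_point :: "nat \<Rightarrow> real" where
  "return_point k = (2 * pi * real k + pi - lag) / (3 * pi / 2)"

definition exit_time :: real where
  "exit_time = lag / (3 * pi)"

definition drift :: real where
  "drift = min (sin (pi / 8)) (sin (lag / 2))"

definition eps_crit :: real where
  "eps_crit = drift * exit_time"

lemma lag_bounds: "0 < lag" "lag < pi / 2"
  using a_pos arctan_ubound by (simp_all add: lag_def)

lemma lag_div_pi_less: "lag / pi < 1 / 2"
  using lag_bounds by (simp add: divide_less_eq)

lemma exit_time_pos: "exit_time > 0"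
  using lag_bounds by (simp add: exit_time_def)

lemma drift_pos: "drift > 0"
  using lag_bounds sin_gt_zero[of "lag / 2"] sin_gt_zero[of "pi / 8"] by (simp add: drift_def)

lemma eps_crit_pos: "eps_crit > 0"
  using drift_pos exit_time_pos by (simp add: eps_crit_def)

lemma return_point_scaled: "3 / 2 * return_point k = 2 * real k + 1 - lag / pi"
  by (simp add: return_point_def field_simps)

lemma exit_window_end_scaled: "3 / 2 * (return_point k + exit_time) = 2 * real k + 1 - lag / (2 * pi)"
proof -
  have "3 / 2 * exit_time = lag / (2 * pi)" "lag / pi = 2 * (lag / (2 * pi))"
    by (simp_all add: exit_time_def)
  then show ?thesis
    using return_point_scaled[of k] distrib_left[of "3 / 2" "return_point k" exit_time] by linarith
qed

lemma return_point_ge: "4 / 3 * real k \<le> return_point k"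
  using return_point_scaled[of k] lag_div_pi_less by linarith

lemma drift_le_sin:
  assumes "2 * real k + 1 / 8 \<le> y" "y \<le> 2 * real k + 1 - lag / (2 * pi)"
  shows "drift \<le> sin (pi * y)"
proof -
  define t where "t = y - 2 * real k"
  have t: "1 / 8 \<le> t" "t \<le> 1 - lag / (2 * pi)"
    using assms by (simp_all add: t_def)
  have "sin (pi * y) = sin (pi * t)"
    using sin_cos_add_2pi_nat(1)[of "pi * t" k] by (simp add: t_def algebra_simps)
  moreover have "drift \<le> sin (pi * t)"
  proof (cases "pi * t \<le> pi / 2")
    case True
    then have "sin (pi / 8) \<le> sin (pi * t)"
      using t by (intro sin_monotone_2pi_le) auto
    then show ?thesis
      by (simp add: drift_def)
  next
    case False
    have "pi * t \<le> pi * (1 - lag / (2 * pi))"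
      using t by simp
    also have "\<dots> = pi - lag / 2"
      by (simp add: field_simps)
    finally have "sin (lag / 2) \<le> sin (pi - pi * t)"
      using False lag_bounds by (intro sin_monotone_2pi_le) (auto simp: field_simps)
    then show ?thesis
      by (simp add: drift_def)
  qed
  ultimately show ?thesis
    by simp
qed

lemma return_point_pos: "0 < return_point k"
  using return_point_scaled[of k] lag_div_pi_less by linarith

end

locale regularized_system = damped_switching +
  fixes \<epsilon> x0 :: real and v :: "real \<Rightarrow> real"
  assumes eps_pos: "\<epsilon> > 0" and solution: "regularized_solution \<psi> a \<epsilon> x0 v"
begin

definition phase :: "real \<Rightarrow> real" where
  "phase x = x * (1 + \<psi> (v x) / 2)"

lemma solution_has_derivative:
  assumes "x0 < x"
  shows "(v has_real_derivative - a * v x - sin (pi * phase x) / \<epsilon>) (at x)"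
proof -
  obtain D where D: "(v has_real_derivative D) (at x within {x0..})"
    "\<epsilon> * D = - a * \<epsilon> * v x - sin (pi * x * (1 + \<psi> (v x) / 2))"
    using solution assms unfolding regularized_solution_def by (meson less_imp_le)
  have "(v has_real_derivative D) (at x)"
    using D(1) assms at_within_interior[of x "{x0..}"] by simp
  moreover have "D = - a * v x - sin (pi * phase x) / \<epsilon>"
    using D(2) eps_pos by (simp add: phase_def field_simps mult.assoc)
  ultimately show ?thesis
    by simp
qed

lemma isCont_solution: "x0 < x \<Longrightarrow> isCont v x"
  using solution_has_derivative by (rule DERIV_isCont)

lemma phase_has_derivative:
  assumes "x0 < x"
  shows "(phase has_real_derivative
      1 + \<psi> (v x) / 2 + x * (deriv \<psi> (v x) * (- a * v x - sin (pi * phase x) / \<epsilon>)) / 2) (at x)"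
proof -
  have "((\<lambda>x. \<psi> (v x)) has_real_derivative
      deriv \<psi> (v x) * (- a * v x - sin (pi * phase x) / \<epsilon>)) (at x)"
    by (rule DERIV_chain2[OF has_derivative solution_has_derivative[OF assms]])
  from DERIV_mult[OF DERIV_ident DERIV_add[OF DERIV_const DERIV_cdivide[OF this, of 2]], of 1]
  show ?thesis
    unfolding phase_def[abs_def] by (simp add: algebra_simps)
qed

lemma isCont_phase: "x0 < x \<Longrightarrow> isCont phase x"
  using phase_has_derivative by (rule DERIV_isCont)

lemma phase_gap: "3 / 2 * x - phase x = x * (1 - \<psi> (v x)) / 2"
  by (simp add: phase_def algebra_simps)

lemma phase_eq_if_ge_1: "1 \<le> v x \<Longrightarrow> phase x = 3 / 2 * x"
  by (simp add: phase_def eq_1)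

definition response :: "real \<Rightarrow> real" where
  "response = forced_response a \<epsilon> (3 * pi / 2)"

definition response_amplitude :: real where
  "response_amplitude = 1 / (\<epsilon> * sqrt ((3 * pi / 2)\<^sup>2 + a\<^sup>2))"

lemma response_amplitude_pos: "response_amplitude > 0"
  using eps_pos a_pos by (simp add: response_amplitude_def add_pos_nonneg)

lemma response_ge: "- response_amplitude \<le> response x"
  unfolding response_def response_amplitude_def using eps_pos
  by (subst minus_divide_left) (intro forced_response_ge, auto simp: add_pos_nonneg)

lemma response_at_return_point: "response (return_point k) = - response_amplitude"
  unfolding response_def response_amplitude_def return_point_def lag_def
  by (subst forced_response_at_minimum) auto

lemma deviation_has_derivative:
  assumes "x0 < x" "1 < v x"
  shows "((\<lambda>x. v x - response x) has_real_derivative - a * (v x - response x)) (at x)"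
proof -
  have "phase x = 3 / 2 * x"
    using phase_eq_if_ge_1[of x] assms(2) by simp
  then have "sin (pi * phase x) = sin (3 * pi / 2 * x)"
    unfolding \<open>phase x = 3 / 2 * x\<close> by (simp add: mult_ac)
  then have "(v has_real_derivative - a * v x - sin (3 * pi / 2 * x) / \<epsilon>) (at x)"
    using solution_has_derivative[OF assms(1)] by simp
  moreover have "(response has_real_derivative - a * response x - sin (3 * pi / 2 * x) / \<epsilon>) (at x)"
    unfolding response_def using eps_pos by (intro forced_response_has_derivative) (auto simp: add_pos_nonneg)
  ultimately show ?thesis
    by (rule DERIV_diff[THEN DERIV_cong]) (simp add: algebra_simps)
qed

lemma isCont_deviation: "x0 < x \<Longrightarrow> isCont (\<lambda>x. v x - response x) x"
  unfolding response_def using eps_pos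
  by (intro continuous_intros isCont_solution DERIV_isCont[OF forced_response_has_derivative]) auto

text \<open>Above the switching layer the equation is linear, so the deviation from the periodic
  response decays exponentially from the last time the solution was at most 1 (or from B).\<close>
lemma deviation_bound:
  assumes "x0 < B" "B \<le> y" "1 < v y"
  shows "v y - response y \<le> max (exp (- a * (y - B)) * \<bar>v B - response B\<bar>) (1 + response_amplitude)"
proof -
  have "continuous_on {B..y} v"
    using assms(1) isCont_solution by (intro continuous_at_imp_continuous_on) auto
  then obtain z where z: "B \<le> z" "z \<le> y" "z = B \<or> v z \<le> 1" "\<And>x. z < x \<Longrightarrow> x \<le> y \<Longrightarrow> 1 < v x"
    using last_time_at_most[OF assms(2), where f = v and c = 1] by blast
  have decay: "v y - response y = exp (- a * (y - z)) * (v z - response z)"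
  proof (rule exp_decay_of_linear_ode[OF z(2)])
    show "continuous_on {z..y} (\<lambda>x. v x - response x)"
      using z(1) assms(1) by (intro continuous_at_imp_continuous_on ballI isCont_deviation) auto
    show "((\<lambda>x. v x - response x) has_real_derivative - a * (v x - response x)) (at x)"
      if "z < x" "x < y" for x
      using deviation_has_derivative z(1,4) that assms(1) by simp
  qed
  show ?thesis
    using z(3)
  proof
    assume "z = B"
    then have "v y - response y \<le> exp (- a * (y - B)) * \<bar>v B - response B\<bar>"
      using decay by (simp add: mult_left_mono)
    then show ?thesis
      by linarith
  next
    assume "v z \<le> 1"
    then have "max 0 (v z - response z) \<le> 1 + response_amplitude"
      using response_ge[of z] response_amplitude_pos by simp
    moreover have "exp (- a * (y - z)) * (v z - response z) \<le> max 0 (v z - response z)"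
      using z(2) a_pos exp_neg_mult_le_max[of "a * (y - z)"] by simp
    ultimately show ?thesis
      using decay by linarith
  qed
qed

lemma returns_below_1:
  assumes "x0 < B"
  shows "\<exists>k. B \<le> return_point k \<and> v (return_point k) \<le> 1"
proof -
  define W where "W = \<bar>v B - response B\<bar>"
  define T where "T = B + W / a"
  obtain k :: nat where "3 / 4 * T \<le> real k"
    using real_arch_simple by blast
  then have far: "B + W / a \<le> return_point k"
    using return_point_ge[of k] unfolding T_def[symmetric] by linarith
  have "W \<le> a * (return_point k - B)"
    using far a_pos by (simp add: field_simps)
  also have "\<dots> \<le> exp (a * (return_point k - B))"
    using exp_ge_add_one_self[of "a * (return_point k - B)"] by linarith
  finally have "exp (- a * (return_point k - B)) * W
      \<le> exp (- a * (return_point k - B)) * exp (a * (return_point k - B))"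
    by simp
  then have "exp (- a * (return_point k - B)) * W \<le> 1"
    by (simp flip: exp_add)
  have "0 \<le> W / a"
    using a_pos by (simp add: W_def)
  then have "B \<le> return_point k"
    using far by linarith
  moreover have "v (return_point k) \<le> 1"
  proof (rule ccontr)
    assume "\<not> v (return_point k) \<le> 1"
    then have "v (return_point k) - response (return_point k) \<le> 1 + response_amplitude"
      using deviation_bound[OF assms \<open>B \<le> return_point k\<close>] \<open>exp (- a * (return_point k - B)) * W \<le> 1\<close>
        response_amplitude_pos by (simp add: W_def)
    then show False
      using \<open>\<not> v (return_point k) \<le> 1\<close> response_at_return_point[of k] by simp
  qed
  ultimately show ?thesis
    by blast
qed

lemma phase_le: "0 \<le> x \<Longrightarrow> phase x \<le> 3 / 2 * x"
  using phase_gap[of x] mult_nonneg_nonneg[of x "1 - \<psi> (v x)"] le_1[of "v x"] by linarith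

lemma leaves_band:
  assumes "x0 < return_point k" "2 < return_point k * (1 - \<psi> 0)" "v (return_point k) \<le> 1"
    and "\<epsilon> \<le> eps_crit"
  shows "\<exists>x\<in>{return_point k..return_point k + exit_time}. phase x < 2 * real k + 1 / 8"
proof (rule ccontr)
  define xs where "xs = return_point k"
  assume "\<not> ?thesis"
  then have above: "2 * real k + 1 / 8 \<le> phase x" if "xs \<le> x" "x \<le> xs + exit_time" for x
    using that by (auto simp: xs_def not_less)
  have xs: "0 < xs" "x0 < xs"
    using assms(1) return_point_pos by (simp_all add: xs_def)
  have window_end: "3 / 2 * xs + 3 / 2 * exit_time = 2 * real k + 1 - lag / (2 * pi)"
    unfolding xs_def by (simp only: exit_window_end_scaled flip: distrib_left)
  have in_window: "drift \<le> sin (pi * phase x) \<and> 0 < v x" if x: "xs \<le> x" "x \<le> xs + exit_time" for x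
  proof
    have "phase x \<le> 3 / 2 * x"
      using phase_le[of x] x xs by simp
    then have "phase x \<le> 2 * real k + 1 - lag / (2 * pi)"
      using window_end x by linarith
    then show "drift \<le> sin (pi * phase x)"
      by (rule drift_le_sin[OF above[OF x]])
    have "0 < lag / (2 * pi)"
      using lag_bounds by simp
    then have "3 / 2 * x - phase x < 1"
      using above[OF x] x window_end by linarith
    then have "x * (1 - \<psi> (v x)) < xs * (1 - \<psi> 0)"
      using phase_gap[of x] assms(2) by (simp add: xs_def)
    also have "\<dots> \<le> x * (1 - \<psi> 0)"
      using x less_1[of 0] by (intro mult_right_mono) simp_all
    finally have "\<psi> 0 < \<psi> (v x)"
      using x xs by (simp add: mult_less_cancel_left_pos)
    then show "0 < v x"
      using mono[of "v x" 0] by linarith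
  qed
  have "v (xs + exit_time) + drift / \<epsilon> * (xs + exit_time) \<le> v xs + drift / \<epsilon> * xs"
  proof (rule DERIV_nonpos_imp_nonincreasing[where f = "\<lambda>x. v x + drift / \<epsilon> * x"])
    fix x assume x: "xs \<le> x" "x \<le> xs + exit_time"
    have "drift / \<epsilon> \<le> sin (pi * phase x) / \<epsilon>" "0 < a * v x"
      using in_window[OF x] a_pos eps_pos by (simp_all add: divide_right_mono)
    moreover have "((\<lambda>x. v x + drift / \<epsilon> * x) has_real_derivative
        - a * v x - sin (pi * phase x) / \<epsilon> + drift / \<epsilon>) (at x)"
      using x xs eps_pos by (auto intro!: derivative_eq_intros solution_has_derivative)
    ultimately show "\<exists>y. ((\<lambda>x. v x + drift / \<epsilon> * x) has_real_derivative y) (at x) \<and> y \<le> 0"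
      by force
  qed (use exit_time_pos in simp)
  moreover have "1 \<le> drift / \<epsilon> * exit_time"
    using assms(4) eps_pos by (simp add: eps_crit_def field_simps)
  ultimately have "v (xs + exit_time) \<le> 0"
    using assms(3) by (simp add: xs_def algebra_simps)
  then show False
    using in_window[of "xs + exit_time"] exit_time_pos by simp
qed

text \<open>On the level sets of the barrier the forcing term equals sin(pi/8) > 0, and near
  v = 1 the steep derivative of the transition function turns this into a strong
  downward push on the phase.\<close>
lemma phase_decreasing_at_barrier:
  assumes b: "0 \<le> b" "\<And>u. b < u \<Longrightarrow> u < 1 \<Longrightarrow> 16 * \<epsilon> / sin (pi / 8) * (1 - \<psi> u) \<le> deriv \<psi> u"
    and x: "x0 < x" "17 / 4 < x * (1 - \<psi> b)"
    and contact: "phase x = phase_barrier x"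
  shows "\<exists>l<0. (phase has_real_derivative l) (at x)"
proof -
  define u where "u = v x"
  define S where "S = sin (pi / 8)"
  define V where "V = - a * u - S / \<epsilon>"
  have S: "0 < S"
    unfolding S_def by (rule sin_gt_zero) auto
  have gap: "1 / 4 \<le> x * (1 - \<psi> u)" "x * (1 - \<psi> u) < 17 / 4"
    using phase_barrier_bounds[of x] phase_gap[of x] contact by (simp_all add: u_def)
  have "0 < x * (1 - \<psi> b)"
    using x(2) by linarith
  then have "0 < x"
    using le_1[of b] by (auto simp: zero_less_mult_iff)
  moreover have "x * (1 - \<psi> u) < x * (1 - \<psi> b)" "0 < x * (1 - \<psi> u)"
    using gap x(2) by linarith+
  ultimately have "\<psi> b < \<psi> u" "\<psi> u < 1"
    by (simp_all add: mult_less_cancel_left_pos zero_less_mult_iff)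
  then have u: "b < u" "u < 1"
    using mono[of u b] eq_1[of u] by (auto simp: not_less[symmetric])
  have "16 * \<epsilon> / S * (1 / 4) \<le> 16 * \<epsilon> / S * (x * (1 - \<psi> u))"
    using gap(1) eps_pos S by (intro mult_left_mono) simp_all
  also have "\<dots> = x * (16 * \<epsilon> / S * (1 - \<psi> u))"
    by (simp add: mult_ac)
  also have "\<dots> \<le> x * deriv \<psi> u"
    using b(2)[OF u] \<open>0 < x\<close> by (intro mult_left_mono) (simp_all add: S_def)
  finally have steep: "4 * \<epsilon> / S \<le> x * deriv \<psi> u"
    by simp
  have V: "V \<le> - S / \<epsilon>"
    unfolding V_def using a_pos u(1) b(1) by simp
  have "x * deriv \<psi> u * V \<le> 4 * \<epsilon> / S * V"
    using steep V divide_pos_pos[OF S eps_pos] by (intro mult_right_mono_neg) simp_all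
  also have "\<dots> \<le> 4 * \<epsilon> / S * (- S / \<epsilon>)"
    using V S eps_pos by (intro mult_left_mono) simp_all
  also have "\<dots> = - 4"
    using S eps_pos by simp
  finally have "1 + \<psi> u / 2 + x * (deriv \<psi> u * V) / 2 < 0"
    using le_1[of u] by (simp add: mult.assoc)
  moreover have "sin (pi * phase x) = S"
    using contact sin_pi_phase_barrier by (simp add: S_def)
  ultimately show ?thesis
    using phase_has_derivative[OF x(1)] by (auto simp: u_def V_def)
qed

lemma enters_below_barrier:
  assumes "\<epsilon> \<le> eps_crit" "x0 < X" "\<And>x. X \<le> x \<Longrightarrow> 2 < x * (1 - \<psi> 0)"
  shows "\<exists>x1\<ge>X. phase x1 < phase_barrier x1"
proof -
  obtain k where k: "X \<le> return_point k" "v (return_point k) \<le> 1"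
    using returns_below_1[OF assms(2)] by blast
  then obtain x1 where x1: "return_point k \<le> x1" "x1 \<le> return_point k + exit_time"
    "phase x1 < 2 * real k + 1 / 8"
    using leaves_band[of k] assms by fastforce
  have "0 < lag / (2 * pi)"
    using lag_bounds by simp
  then have "phase_barrier x1 = 2 * real k + 1 / 8"
    using x1(1,2) return_point_scaled[of k] exit_window_end_scaled[of k] lag_div_pi_less
      distrib_left[of "3 / 2" "return_point k" exit_time]
    by (intro phase_barrier_eq) linarith+
  then show ?thesis
    using x1(1,3) k(1) by (intro exI[of _ x1]) simp
qed

theorem eventually_below_1:
  assumes "\<epsilon> < eps_crit"
  shows "\<exists>xT\<ge>0. \<forall>x\<ge>xT. x \<ge> x0 \<longrightarrow> v x < 1"
proof -
  have "\<forall>\<^sub>F u in at_left 1. 16 * \<epsilon> / sin (pi / 8) * (1 - \<psi> u) \<le> deriv \<psi> u"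
    using eps_pos by (intro eventually_deriv_ge_gap) (simp add: sin_gt_zero)
  then obtain b0 where "b0 < 1"
    "\<And>u. b0 < u \<Longrightarrow> u < 1 \<Longrightarrow> 16 * \<epsilon> / sin (pi / 8) * (1 - \<psi> u) \<le> deriv \<psi> u"
    by (auto simp: eventually_at_left_field)
  then obtain b where b: "b < 1" "0 \<le> b"
    "\<And>u. b < u \<Longrightarrow> u < 1 \<Longrightarrow> 16 * \<epsilon> / sin (pi / 8) * (1 - \<psi> u) \<le> deriv \<psi> u"
    by (intro that[of "max b0 0"]) auto
  have "\<forall>\<^sub>F x in at_top. x0 < x \<and> 0 < x \<and> 17 / 4 < x * (1 - \<psi> b) \<and> 2 < x * (1 - \<psi> 0)"
    using less_1[of b] less_1[of 0] b(1)
    by (intro eventually_conj eventually_gt_at_top eventually_less_mult_at_top) simp_all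
  then obtain X where X: "\<And>x. X \<le> x \<Longrightarrow> x0 < x \<and> 0 < x \<and> 17 / 4 < x * (1 - \<psi> b) \<and> 2 < x * (1 - \<psi> 0)"
    by (auto simp: eventually_at_top_linorder)
  obtain x1 where x1: "X \<le> x1" "phase x1 < phase_barrier x1"
    using enters_below_barrier[of X] X assms by force
  have below: "phase x < phase_barrier x" if "x1 \<le> x" for x
  proof (rule stays_below_nondecreasing[where m = phase, OF mono_phase_barrier _ x1(2) _ that])
    show "isCont phase x" if "x1 \<le> x" for x
      using that X[of x] x1(1) by (intro isCont_phase) auto
    show "\<exists>l<0. (phase has_real_derivative l) (at x)" if "x1 < x" "phase x = phase_barrier x" for x
      using X[of x] that x1(1) b by (intro phase_decreasing_at_barrier[of b]) auto
  qed
  show ?thesis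
  proof (intro exI[of _ x1] conjI allI impI)
    show "0 \<le> x1"
      using X[of x1] x1(1) by simp
    fix x assume "x1 \<le> x"
    then show "v x < 1"
      using below[of x] phase_barrier_bounds(1)[of x] phase_eq_if_ge_1[of x] by fastforce
  qed
qed

end

theorem proposition6:
  fixes \<psi> :: "real \<Rightarrow> real" and a :: real
  assumes "transition_function \<psi>" and "a > 0"
  shows "\<exists>\<epsilon>0>0. \<forall>\<epsilon>. 0 < \<epsilon> \<and> \<epsilon> < \<epsilon>0 \<longrightarrow>
           (\<forall>x0 v. regularized_solution \<psi> a \<epsilon> x0 v \<longrightarrow>
              (\<exists>xT\<ge>0. \<forall>x\<ge>xT. x \<ge> x0 \<longrightarrow> v x < 1))"
proof -
  interpret damped_switching \<psi> a
    using assms by (simp add: damped_switching_def damped_switching_axioms_def transition_def)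
  show ?thesis
  proof (rule exI[of _ eps_crit], intro conjI allI impI)
    show "0 < eps_crit"
      by (rule eps_crit_pos)
    fix \<epsilon> x0 v
    assume \<epsilon>: "0 < \<epsilon> \<and> \<epsilon> < eps_crit" and "regularized_solution \<psi> a \<epsilon> x0 v"
    then interpret regularized_system \<psi> a \<epsilon> x0 v
      by unfold_locales simp_all
    show "\<exists>xT\<ge>0. \<forall>x\<ge>xT. x \<ge> x0 \<longrightarrow> v x < 1"
      using \<epsilon> eventually_below_1 by blast
  qed
qed

end
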